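(* Let $k\ge 2$ and $m\ge 5$ be integers and let $G$ be the complete $k$-partite graph $K(m,2,\ldots,2)$ (one part of size $m$ and $k-1$ parts of size $2$). Then $h(G)=ch(G)\ge k+1$.
   Context: All graphs are finite and simple. A list assignment $L$ to a graph $G$ assigns a finite set $L(v)$ to each vertex $v$; a proper $L$-coloring is a map $\psi$ with $\psi(v)\in L(v)$ for all $v$ and $\psi(u)\ne\psi(v)$ for every edge $uv$. The choice number $ch(G)$ is the least $k$ such that $G$ is properly $L$-colorable whenever $|L(v)|\ge k$ for all $v$. For a subgraph $H$ of $G$ and a color $\sigma$, let $H_\sigma$ denote the subgraph of $H$ induced by $\{v\in V(H):\sigma\in L(v)\}$, and let $\alpha$ denote the independence number (with $\alpha$ of the null graph equal to $0$). $G$ and $L$ satisfy Hall's condition if $\sum_{\sigma}\alpha(H_\sigma)\ge |V(H)|$ for every subgraph $H$ of $G$, the sum being over all colors. The Hall number $h(G)$ is the smallest positive integer $k$ such that $G$ has a proper $L$-coloring whenever $G$ and $L$ satisfy Hall's condition and $|L(v)|\ge k$ for every $v\in V(G)$. *)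

theory Defs
  imports Main
begin

text \<open>A finite simple graph is given by a vertex set V and an edge relation E
  (symmetric, irreflexive on V). Colours are natural numbers.\<close>

definition independent :: "('a \<Rightarrow> 'a \<Rightarrow> bool) \<Rightarrow> 'a set \<Rightarrow> bool" where
  "independent E S \<longleftrightarrow> (\<forall>u\<in>S. \<forall>v\<in>S. \<not> E u v)"

definition alpha :: "'a set \<Rightarrow> ('a \<Rightarrow> 'a \<Rightarrow> bool) \<Rightarrow> nat" where
  "alpha W E = Max {card S | S. S \<subseteq> W \<and> independent E S}"

definition proper_L_coloring ::
  "'a set \<Rightarrow> ('a \<Rightarrow> 'a \<Rightarrow> bool) \<Rightarrow> ('a \<Rightarrow> nat set) \<Rightarrow> ('a \<Rightarrow> nat) \<Rightarrow> bool" where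
  "proper_L_coloring V E L \<psi> \<longleftrightarrow>
     (\<forall>v\<in>V. \<psi> v \<in> L v) \<and> (\<forall>u\<in>V. \<forall>v\<in>V. E u v \<longrightarrow> \<psi> u \<noteq> \<psi> v)"

definition L_colorable :: "'a set \<Rightarrow> ('a \<Rightarrow> 'a \<Rightarrow> bool) \<Rightarrow> ('a \<Rightarrow> nat set) \<Rightarrow> bool" where
  "L_colorable V E L \<longleftrightarrow> (\<exists>\<psi>. proper_L_coloring V E L \<psi>)"

definition is_subgraph ::
  "'a set \<Rightarrow> ('a \<Rightarrow> 'a \<Rightarrow> bool) \<Rightarrow> 'a set \<Rightarrow> ('a \<Rightarrow> 'a \<Rightarrow> bool) \<Rightarrow> bool" where
  "is_subgraph W F V E \<longleftrightarrow> W \<subseteq> V \<and> (\<forall>u v. F u v \<longrightarrow> E u v \<and> u \<in> W \<and> v \<in> W)"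

text \<open>Hall's condition: for every subgraph H = (W,F),
  sum over colours sigma of alpha(H_sigma) >= |W|. Colours not in any list of W
  contribute 0, so the sum is taken over the colours appearing on W.\<close>
definition hall_condition :: "'a set \<Rightarrow> ('a \<Rightarrow> 'a \<Rightarrow> bool) \<Rightarrow> ('a \<Rightarrow> nat set) \<Rightarrow> bool" where
  "hall_condition V E L \<longleftrightarrow>
     (\<forall>W F. is_subgraph W F V E \<longrightarrow>
        (\<Sum>\<sigma>\<in>(\<Union>v\<in>W. L v). alpha {v\<in>W. \<sigma> \<in> L v} F) \<ge> card W)"

definition list_assignment_min :: "'a set \<Rightarrow> ('a \<Rightarrow> nat set) \<Rightarrow> nat \<Rightarrow> bool" where
  "list_assignment_min V L k \<longleftrightarrow> (\<forall>v\<in>V. finite (L v) \<and> card (L v) \<ge> k)"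

definition choice_number :: "'a set \<Rightarrow> ('a \<Rightarrow> 'a \<Rightarrow> bool) \<Rightarrow> nat" where
  "choice_number V E = (LEAST k. \<forall>L. list_assignment_min V L k \<longrightarrow> L_colorable V E L)"

definition hall_number :: "'a set \<Rightarrow> ('a \<Rightarrow> 'a \<Rightarrow> bool) \<Rightarrow> nat" where
  "hall_number V E = (LEAST k. 0 < k \<and>
     (\<forall>L. list_assignment_min V L k \<and> hall_condition V E L \<longrightarrow> L_colorable V E L))"

text \<open>Complete k-partite graph K(m,2,...,2): vertices (i,j) with part index i < k,
  part 0 of size m, parts 1..k-1 of size 2; adjacency iff in different parts.\<close>
definition Kpart_V :: "nat \<Rightarrow> nat \<Rightarrow> (nat \<times> nat) set" where
  "Kpart_V m k = {(i, j). i < k \<and> j < (if i = 0 then m else 2)}"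

definition Kpart_E :: "nat \<times> nat \<Rightarrow> nat \<times> nat \<Rightarrow> bool" where
  "Kpart_E u v \<longleftrightarrow> fst u \<noteq> fst v"

end

theory Submission
  imports Defs
begin

(* Lists of size at least k satisfy Hall's condition on any graph with a proper
   k-colouring: splitting H_sigma along the colour classes gives
   |H_sigma| <= k alpha(H_sigma), and summing over sigma counts every vertex v of H
   |L(v)| >= k times. So once ch(G) > k, a non-colourable assignment with lists of
   size ch(G) - 1 satisfies Hall's condition, and h(G) = ch(G).

   To get ch(G) > k, give the two vertices of each part of size 2 the palettes
   A = {0..<k} and B = k + {0..<k}. In a proper colouring the k - 1 vertices using
   A miss only one colour a of A, and those using B miss only one colour k + b of B.
   The five vertices (0, j) get A - I_j together with k + ({0..<k} - J_j), where the
   rectangles I_j x J_j, with |I_j| + |J_j| <= k, tile the k x k grid like a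
   pinwheel; the rectangle containing (a, b) leaves its vertex no colour. *)

lemma list_assignment_min_mono:
  "list_assignment_min V L s \<Longrightarrow> t \<le> s \<Longrightarrow> list_assignment_min V L t"
  unfolding list_assignment_min_def by auto

lemma card_le_alpha:
  assumes "finite W" "S \<subseteq> W" "independent F S"
  shows "card S \<le> alpha W F"
proof -
  have "finite {card S | S. S \<subseteq> W \<and> independent F S}"
    by (rule finite_subset[of _ "card ` Pow W"]) (auto simp: assms)
  then show ?thesis
    unfolding alpha_def using assms by (intro Max_ge) blast+
qed

lemma card_le_mult_alpha:
  assumes "finite W" and proper: "\<forall>u\<in>W. \<forall>v\<in>W. F u v \<longrightarrow> f u \<noteq> f v"
    and colors: "f ` W \<subseteq> {..<k}"
  shows "card W \<le> k * alpha W F"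
proof -
  have "W = (\<Union>i<k. {v\<in>W. f v = i})" using colors by auto
  then have "card W \<le> (\<Sum>i<k. card {v\<in>W. f v = i})"
    by (metis card_UN_le finite_lessThan)
  also have "\<dots> \<le> (\<Sum>i<k. alpha W F)"
    using assms(1) proper by (intro sum_mono card_le_alpha) (force simp: independent_def)+
  also have "\<dots> = k * alpha W F" by simp
  finally show ?thesis .
qed

lemma hall_condition_if_lists_ge_colors:
  assumes "finite V"
    and proper: "\<forall>u\<in>V. \<forall>v\<in>V. E u v \<longrightarrow> f u \<noteq> f v" and colors: "f ` V \<subseteq> {..<k}"
    and lists: "list_assignment_min V L k"
  shows "hall_condition V E L"
  unfolding hall_condition_def
proof (intro allI impI)
  fix W F assume "is_subgraph W F V E"
  then have WV: "W \<subseteq> V" and FE: "\<And>u v. F u v \<Longrightarrow> E u v \<and> u \<in> W \<and> v \<in> W"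
    unfolding is_subgraph_def by auto
  define C where "C = (\<Union>v\<in>W. L v)"
  have finW: "finite W" using WV assms(1) finite_subset by blast
  have finL: "finite (L v)" and cardL: "k \<le> card (L v)" if "v \<in> W" for v
    using lists WV that unfolding list_assignment_min_def by auto
  have finC: "finite C" unfolding C_def using finW finL by blast
  have "k * card W \<le> (\<Sum>v\<in>W. card (L v))"
    using sum_mono[of W "\<lambda>_. k" "\<lambda>v. card (L v)"] cardL by (simp add: mult.commute)
  also have "\<dots> = (\<Sum>\<sigma>\<in>C. card {v\<in>W. \<sigma> \<in> L v})"
  proof (rule sum_multicount_gen[symmetric, OF finC finW], intro ballI)
    fix v assume "v \<in> W"
    then have "{\<sigma>\<in>C. \<sigma> \<in> L v} = L v" unfolding C_def by blast
    then show "card {\<sigma>\<in>C. \<sigma> \<in> L v} = card (L v)" by simp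
  qed
  also have "\<dots> \<le> (\<Sum>\<sigma>\<in>C. k * alpha {v\<in>W. \<sigma> \<in> L v} F)"
    using finW WV proper colors by (intro sum_mono card_le_mult_alpha[where f = f]) (force dest!: FE)+
  also have "\<dots> = k * (\<Sum>\<sigma>\<in>C. alpha {v\<in>W. \<sigma> \<in> L v} F)"
    by (simp add: sum_distrib_left)
  finally have bound: "k * card W \<le> k * (\<Sum>\<sigma>\<in>C. alpha {v\<in>W. \<sigma> \<in> L v} F)" .
  show "card W \<le> (\<Sum>\<sigma>\<in>(\<Union>v\<in>W. L v). alpha {v\<in>W. \<sigma> \<in> L v} F)"
  proof (cases "W = {}")
    case False
    then have "0 < k" using WV colors by fastforce
    with bound show ?thesis unfolding C_def by simp
  qed simp
qed

lemma inj_on_choice_exists: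
  assumes "finite W" "\<forall>v\<in>W. finite (L v) \<and> card W \<le> card (L v)"
  shows "\<exists>\<psi>. (\<forall>v\<in>W. \<psi> v \<in> L v) \<and> inj_on \<psi> W"
  using assms
proof (induction W rule: finite_induct)
  case empty
  then show ?case by simp
next
  case (insert x W)
  then have "\<forall>v\<in>W. finite (L v) \<and> card W \<le> card (L v)" by auto
  then obtain \<psi> where \<psi>: "\<forall>v\<in>W. \<psi> v \<in> L v" "inj_on \<psi> W" using insert.IH by blast
  have "card (\<psi> ` W) < card (L x)"
    using insert card_image_le[of W \<psi>] by auto
  then have "\<not> L x \<subseteq> \<psi> ` W"
    by (metis card_mono finite_imageI insert.hyps(1) leD)
  then obtain c where c: "c \<in> L x" "c \<notin> \<psi> ` W" by blast
  show ?case
    using \<psi> c insert.hyps by (intro exI[of _ "\<psi>(x := c)"]) (auto simp: inj_on_def)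
qed

lemma L_colorable_if_lists_ge_card:
  assumes "finite V" "irreflp_on V E" "list_assignment_min V L (card V)"
  shows "L_colorable V E L"
proof -
  obtain \<psi> where "\<forall>v\<in>V. \<psi> v \<in> L v" "inj_on \<psi> V"
    using inj_on_choice_exists assms unfolding list_assignment_min_def by blast
  then have "proper_L_coloring V E L \<psi>"
    using assms(2) unfolding proper_L_coloring_def inj_on_def irreflp_on_def by metis
  then show ?thesis unfolding L_colorable_def by blast
qed

lemma L_colorable_if_lists_ge_choice_number:
  assumes "finite V" "irreflp_on V E" "list_assignment_min V L (choice_number V E)"
  shows "L_colorable V E L"
proof -
  have "\<forall>L. list_assignment_min V L (card V) \<longrightarrow> L_colorable V E L"
    using assms(1,2) L_colorable_if_lists_ge_card by blast
  then have "\<forall>L. list_assignment_min V L (choice_number V E) \<longrightarrow> L_colorable V E L"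
    unfolding choice_number_def by (rule LeastI)
  then show ?thesis using assms(3) by blast
qed

lemma less_choice_number_if_not_L_colorable:
  assumes "finite V" "irreflp_on V E" "list_assignment_min V L k" "\<not> L_colorable V E L"
  shows "k < choice_number V E"
  using assms L_colorable_if_lists_ge_choice_number list_assignment_min_mono not_le by metis

lemma not_L_colorable_below_choice_number:
  assumes "s < choice_number V E"
  obtains L where "list_assignment_min V L s" "\<not> L_colorable V E L"
  using not_less_Least[OF assms[unfolded choice_number_def]] by blast

lemma hall_number_eq_choice_number:
  assumes "finite V" "irreflp_on V E"
    and hall: "\<And>L. list_assignment_min V L k \<Longrightarrow> hall_condition V E L"
    and "k < choice_number V E"
  shows "hall_number V E = choice_number V E"
  unfolding hall_number_def
proof (rule Least_equality)
  show "0 < choice_number V E \<and> (\<forall>L. list_assignment_min V L (choice_number V E)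
          \<and> hall_condition V E L \<longrightarrow> L_colorable V E L)"
    using assms L_colorable_if_lists_ge_choice_number by auto
next
  fix y assume y: "0 < y \<and> (\<forall>L. list_assignment_min V L y \<and> hall_condition V E L
                     \<longrightarrow> L_colorable V E L)"
  show "choice_number V E \<le> y"
  proof (rule ccontr)
    assume "\<not> choice_number V E \<le> y"
    have "choice_number V E - 1 < choice_number V E" using assms(4) by simp
    then obtain L where L: "list_assignment_min V L (choice_number V E - 1)" "\<not> L_colorable V E L"
      by (rule not_L_colorable_below_choice_number)
    have "hall_condition V E L"
      using hall list_assignment_min_mono[OF L(1)] assms(4) by simp
    moreover have "list_assignment_min V L y"
      using list_assignment_min_mono[OF L(1)] \<open>\<not> choice_number V E \<le> y\<close> by simp
    ultimately show False using y L(2) by blast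
  qed
qed

lemma proper_L_coloring_clique_misses_one:
  assumes \<psi>: "proper_L_coloring V E L \<psi>" and "S \<subseteq> V"
    and clique: "\<forall>u\<in>S. \<forall>v\<in>S. u \<noteq> v \<longrightarrow> E u v"
    and lists: "\<forall>v\<in>S. L v = P" and "finite P" and "card P = Suc (card S)"
  obtains c where "c \<in> P" "P - {c} \<subseteq> \<psi> ` S"
proof -
  have "inj_on \<psi> S" using \<psi> \<open>S \<subseteq> V\<close> clique unfolding proper_L_coloring_def inj_on_def by blast
  moreover have "\<psi> ` S \<subseteq> P" using \<psi> \<open>S \<subseteq> V\<close> lists unfolding proper_L_coloring_def by auto
  ultimately have "card (P - \<psi> ` S) = 1"
    using assms(5,6) by (simp add: card_Diff_subset card_image finite_subset)
  then obtain c where "P - \<psi> ` S = {c}" by (meson card_1_singletonE)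
  then show ?thesis using that by blast
qed

(* The central rectangle is empty or a single cell. *)
definition pinwheel :: "nat \<Rightarrow> nat \<Rightarrow> nat set \<times> nat set" where
  "pinwheel k j = (let p = k div 2; q = k - p in
     if j = 0 then ({..<q}, {..<p})
     else if j = 1 then ({..<p}, {p..<k})
     else if j = 2 then ({p..<k}, {q..<k})
     else if j = 3 then ({q..<k}, {..<q})
     else ({p..<q}, {p..<q}))"

lemma pinwheel_covers:
  assumes "a < k" "b < k"
  shows "\<exists>j<5. a \<in> fst (pinwheel k j) \<and> b \<in> snd (pinwheel k j)"
proof -
  have "\<exists>j\<in>{0, 1, 2, 3, 4}. a \<in> fst (pinwheel k j) \<and> b \<in> snd (pinwheel k j)"
    using assms by (simp add: pinwheel_def Let_def) arith
  then show ?thesis by force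
qed

lemma pinwheel_subset: "fst (pinwheel k j) \<subseteq> {..<k}" "snd (pinwheel k j) \<subseteq> {..<k}"
  by (auto simp: pinwheel_def Let_def)

lemma pinwheel_card:
  "2 \<le> k \<Longrightarrow> card (fst (pinwheel k j)) + card (snd (pinwheel k j)) \<le> k"
  by (simp add: pinwheel_def Let_def) presburger

fun pinwheel_lists :: "nat \<Rightarrow> nat \<times> nat \<Rightarrow> nat set" where
  "pinwheel_lists k (i, j) =
     (if i = 0 then ({..<k} - fst (pinwheel k j)) \<union> (+) k ` ({..<k} - snd (pinwheel k j))
      else if j = 0 then {..<k} else (+) k ` {..<k})"

lemma list_assignment_min_pinwheel_lists:
  assumes "2 \<le> k"
  shows "list_assignment_min (Kpart_V m k) (pinwheel_lists k) k"
  unfolding list_assignment_min_def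
proof (intro ballI conjI)
  fix v assume "v \<in> Kpart_V m k"
  obtain i j where v: "v = (i, j)" by fastforce
  let ?I = "fst (pinwheel k j)" and ?J = "snd (pinwheel k j)"
  have "card ({..<k} - ?I \<union> (+) k ` ({..<k} - ?J)) = (k - card ?I) + (k - card ?J)"
    using pinwheel_subset[of k j]
    by (subst card_Un_disjoint) (auto simp: card_image card_Diff_subset finite_subset)
  then show "k \<le> card (pinwheel_lists k v)" "finite (pinwheel_lists k v)"
    using pinwheel_card[OF assms, of j] by (auto simp: v card_image)
qed

lemma not_L_colorable_pinwheel_lists:
  assumes "2 \<le> k" "5 \<le> m"
  shows "\<not> L_colorable (Kpart_V m k) Kpart_E (pinwheel_lists k)"
proof
  assume "L_colorable (Kpart_V m k) Kpart_E (pinwheel_lists k)"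
  then obtain \<psi> where \<psi>: "proper_L_coloring (Kpart_V m k) Kpart_E (pinwheel_lists k) \<psi>"
    unfolding L_colorable_def by blast
  let ?S = "\<lambda>l. {1..<k} \<times> {l}"
  have small_parts: "?S 0 \<subseteq> Kpart_V m k" "?S 1 \<subseteq> Kpart_V m k"
    by (auto simp: Kpart_V_def)
  have cliques: "\<forall>u\<in>?S l. \<forall>v\<in>?S l. u \<noteq> v \<longrightarrow> Kpart_E u v" for l :: nat
    by (auto simp: Kpart_E_def)
  have card_S: "card (?S l) = k - 1" for l :: nat
    by (simp add: card_cartesian_product)
  obtain a where a: "a \<in> {..<k}" "{..<k} - {a} \<subseteq> \<psi> ` ?S 0"
    by (rule proper_L_coloring_clique_misses_one[OF \<psi> small_parts(1) cliques,
          where P = "{..<k}"]) (use assms(1) card_S in auto)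
  obtain c where c: "c \<in> (+) k ` {..<k}" "(+) k ` {..<k} - {c} \<subseteq> \<psi> ` ?S 1"
    by (rule proper_L_coloring_clique_misses_one[OF \<psi> small_parts(2) cliques,
          where P = "(+) k ` {..<k}"]) (use assms(1) card_S in \<open>auto simp: card_image\<close>)
  then obtain b where b: "b < k" "c = k + b" by blast
  obtain j where j: "j < 5" "a \<in> fst (pinwheel k j)" "b \<in> snd (pinwheel k j)"
    using pinwheel_covers a(1) b(1) by blast
  have v: "(0, j) \<in> Kpart_V m k" using j(1) assms by (simp add: Kpart_V_def)
  then have "\<psi> (0, j) \<in> pinwheel_lists k (0, j)"
    using \<psi> unfolding proper_L_coloring_def by blast
  also have "\<dots> \<subseteq> ({..<k} - {a}) \<union> ((+) k ` {..<k} - {c})"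
    using j(2,3) b by auto
  also have "\<dots> \<subseteq> \<psi> ` (?S 0 \<union> ?S 1)"
    using a(2) c(2) by blast
  finally obtain u where u: "\<psi> (0, j) = \<psi> u" "u \<in> ?S 0 \<union> ?S 1"
    by (rule imageE)
  have "u \<in> Kpart_V m k" "Kpart_E (0, j) u"
    using u(2) small_parts by (auto simp: Kpart_E_def)
  then show False
    using \<psi> v u(1) unfolding proper_L_coloring_def by blast
qed

lemma finite_Kpart_V: "finite (Kpart_V m k)"
proof (rule finite_subset)
  show "Kpart_V m k \<subseteq> {..<k} \<times> {..<max m 2}"
    by (auto simp: Kpart_V_def split: if_splits)
qed simp

theorem corollaryD:
  fixes k m :: nat
  assumes "k \<ge> 2" and "m \<ge> 5"
  shows "hall_number (Kpart_V m k) Kpart_E = choice_number (Kpart_V m k) Kpart_E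
         \<and> choice_number (Kpart_V m k) Kpart_E \<ge> k + 1"
proof -
  have irrefl: "irreflp_on (Kpart_V m k) Kpart_E"
    by (simp add: irreflp_on_def Kpart_E_def)
  have choice: "k < choice_number (Kpart_V m k) Kpart_E"
    by (rule less_choice_number_if_not_L_colorable[OF finite_Kpart_V irrefl
          list_assignment_min_pinwheel_lists[OF assms(1)] not_L_colorable_pinwheel_lists[OF assms]])
  have hall: "hall_condition (Kpart_V m k) Kpart_E L"
    if "list_assignment_min (Kpart_V m k) L k" for L
    by (rule hall_condition_if_lists_ge_colors[where f = fst, OF finite_Kpart_V _ _ that])
      (auto simp: Kpart_V_def Kpart_E_def)
  have "hall_number (Kpart_V m k) Kpart_E = choice_number (Kpart_V m k) Kpart_E"
    by (rule hall_number_eq_choice_number[OF finite_Kpart_V irrefl hall choice])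
  with choice show ?thesis by simp
qed

end
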